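(* For every $x \in \mathbb{R}$ and $k \in \mathbb{Z}$, we have \[ \mathfrak{a}(x) = \mathfrak{a}(x+1), \qquad \mathfrak{b}_k(x) = \mathfrak{b}_k(x+1). \] If additionally $\alpha_k = \alpha_{-k}$ for every $k \in \mathbb{Z}$, then we also have \[ \mathfrak{a}(x) = \mathfrak{a}(0), \qquad \|\mathfrak{b}(x)\|_{\ell^2(\mathbb{Z})} = \|\mathfrak{b}(0)\|_{\ell^2(\mathbb{Z})}. \]
   Context: Setting: $\mathcal X=H^{s,p}(\mathbb{R};\mathbb{R}^n)$, $p\in[2,\infty)$, $s>1/p$. PDE $\mathrm{d}u=Au\,\mathrm{d}t+f(u)\,\mathrm{d}t$ with $A$ generating a translation-commuting $C_0$-semigroup, $f$ smooth as a Nemytskii map on $\mathcal X$; stable traveling pulse $u^*(x-ct)$. $\mathcal T_xf=f(\cdot-x)$. The isochron map $\pi_{\mathrm{iso}}$ (upright $\pi$ in the paper, not the circle constant) is defined near $\{\mathcal T_xu^*\}$ by $\lim_{t\to\infty}\|u^v(t)-u^*(\cdot-ct-\pi_{\mathrm{iso}}(v))\|_{\mathcal X}=0$; it satisfies $\pi_{\mathrm{iso}}(\mathcal T_xu)=x+\pi_{\mathrm{iso}}(u)$, hence $\pi_{\mathrm{iso}}'(\mathcal T_xu)[v]=\pi_{\mathrm{iso}}'(u)[\mathcal T_{-x}v]$ and $\pi_{\mathrm{iso}}''(\mathcal T_xu)[v,w]=\pi_{\mathrm{iso}}''(u)[\mathcal T_{-x}v,\mathcal T_{-x}w]$, and $\pi_{\mathrm{iso}}'(u^*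 )[v]=\langle\psi,v\rangle$ where $\psi$ is the bounded functional with $\Pi^cf=-\langle\psi,f\rangle\partial_xu^*$ ($\Pi^c$ the spectral projection of $\mathcal L=A+c\partial_x+f'(u^* )$ onto $\mathrm{span}\{\partial_xu^*\}$). Noise basis $e_k(x)=\sqrt2\cos(2\pi kx)$ ($k>0$), $e_0=1$, $e_k(x)=\sqrt2\sin(2\pi kx)$ ($k<0$), coefficients $\alpha_k$, nonlinearity $g$. Define $\mathfrak a(x)=\tfrac12\sum_k\alpha_k^2\big(\pi_{\mathrm{iso}}'(\mathcal T_xu^* )[g'(\mathcal T_xu^* )g(\mathcal T_xu^* )e_k^2]+\pi_{\mathrm{iso}}''(\mathcal T_xu^* )[g(\mathcal T_xu^* )e_k,g(\mathcal T_xu^* )e_k]\big)$, $\mathfrak b_k(x)=\alpha_k\pi_{\mathrm{iso}}'(\mathcal T_xu^* )[g(\mathcal T_xu^* )e_k]$, and $\mathfrak b(x)=(\mathfrak b_k(x))_{k\in\mathbb{Z}}$. *)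

theory Defs
  imports "HOL-Analysis.Analysis"
begin

definition transl :: "real \<Rightarrow> (real \<Rightarrow> 'a) \<Rightarrow> (real \<Rightarrow> 'a)" where
  "transl x f = (\<lambda>y. f (y - x))"

definition ebasis :: "int \<Rightarrow> real \<Rightarrow> real" where
  "ebasis k y = (if k > 0 then sqrt 2 * cos (2 * pi * of_int k * y)
                 else if k = 0 then 1
                 else sqrt 2 * sin (2 * pi * of_int k * y))"

definition nem :: "('b \<Rightarrow> 'c) \<Rightarrow> (real \<Rightarrow> 'b) \<Rightarrow> (real \<Rightarrow> 'c)" where
  "nem G u = (\<lambda>y. G (u y))"

definition nem_deriv :: "('b \<Rightarrow> 'b \<Rightarrow> 'c) \<Rightarrow> (real \<Rightarrow> 'b) \<Rightarrow> (real \<Rightarrow> 'b) \<Rightarrow> (real \<Rightarrow> 'c)" where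
  "nem_deriv DG u w = (\<lambda>y. DG (u y) (w y))"

definition fmult :: "(real \<Rightarrow> real) \<Rightarrow> (real \<Rightarrow> 'a::real_vector) \<Rightarrow> (real \<Rightarrow> 'a)" where
  "fmult h v = (\<lambda>y. h y *\<^sub>R v y)"

text \<open>The coefficient b_k(x) = alpha_k pi'(T_x u*)[g(T_x u*) e_k].
  dpi u v stands for pi_iso'(u)[v], d2pi u v w for pi_iso''(u)[v,w].\<close>
definition frak_b ::
  "(int \<Rightarrow> real) \<Rightarrow> ((real \<Rightarrow> 'a) \<Rightarrow> (real \<Rightarrow> 'a::real_vector) \<Rightarrow> real)
   \<Rightarrow> ('a \<Rightarrow> 'a) \<Rightarrow> (real \<Rightarrow> 'a) \<Rightarrow> real \<Rightarrow> int \<Rightarrow> real" where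
  "frak_b \<alpha> dpi G ustar x k =
     \<alpha> k * dpi (transl x ustar) (fmult (ebasis k) (nem G (transl x ustar)))"

definition frak_a ::
  "(int \<Rightarrow> real) \<Rightarrow> ((real \<Rightarrow> 'a) \<Rightarrow> (real \<Rightarrow> 'a::real_vector) \<Rightarrow> real)
   \<Rightarrow> ((real \<Rightarrow> 'a) \<Rightarrow> (real \<Rightarrow> 'a) \<Rightarrow> (real \<Rightarrow> 'a) \<Rightarrow> real)
   \<Rightarrow> ('a \<Rightarrow> 'a) \<Rightarrow> ('a \<Rightarrow> 'a \<Rightarrow> 'a) \<Rightarrow> (real \<Rightarrow> 'a) \<Rightarrow> real \<Rightarrow> real" where
  "frak_a \<alpha> dpi d2pi G DG ustar x =
     1/2 * (\<Sum>\<^sub>\<infinity>k::int. (\<alpha> k)\<^sup>2 *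
        (dpi (transl x ustar)
             (nem_deriv DG (transl x ustar) (fmult (\<lambda>y. (ebasis k y)\<^sup>2) (nem G (transl x ustar))))
       + d2pi (transl x ustar) (fmult (ebasis k) (nem G (transl x ustar)))
                               (fmult (ebasis k) (nem G (transl x ustar)))))"

definition l2norm :: "(int \<Rightarrow> real) \<Rightarrow> real" where
  "l2norm b = sqrt (\<Sum>\<^sub>\<infinity>k::int. (b k)\<^sup>2)"

end

theory Submission
  imports Defs
begin

(* By equivariance of the isochron map, b_k(x) and the k-th summand of a(x) are the
   expressions at u* with e_k replaced by its translate e_k(. + x); periodicity of e_k
   gives periodicity in x. The translates of e_k and e_-k arise from e_k and e_-k by a
   rotation through the angle 2 pi k x, and since pi' at u* is linear, pi'' at u* bilinear
   and e_k^2 + e_-k^2 = 2, the paired quantities b_k^2 + b_-k^2 and a_k + a_-k are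
   rotation invariant. If alpha is even, pairing k with -k in the sums over Z therefore
   removes all dependence on x. *)

lemma transl_transl [simp]: "transl a (transl b f) = transl (a + b) f"
  by (simp add: transl_def algebra_simps)

lemma transl_0 [simp]: "transl 0 f = f"
  by (simp add: transl_def)

lemma transl_nem: "transl a (nem G u) = nem G (transl a u)"
  by (simp add: transl_def nem_def)

lemma transl_fmult: "transl a (fmult h v) = fmult (transl a h) (transl a v)"
  by (simp add: transl_def fmult_def)

lemma transl_nem_deriv: "transl a (nem_deriv DG u w) = nem_deriv DG (transl a u) (transl a w)"
  by (simp add: transl_def nem_deriv_def)

lemmas transl_pointwise = transl_nem transl_fmult transl_nem_deriv

lemma fmult_fmult: "fmult h1 (fmult h2 v) = fmult (\<lambda>y. h1 y * h2 y) v"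
  by (simp add: fmult_def)

lemma fmult_lincomb:
  "fmult (\<lambda>y. a * h1 y + b * h2 y) v = (\<lambda>y. a *\<^sub>R fmult h1 v y + b *\<^sub>R fmult h2 v y)"
  by (simp add: fmult_def scaleR_add_left)

lemma nem_deriv_fmult_add:
  assumes "\<And>z. linear (DG z)"
  shows "(\<lambda>y. nem_deriv DG u (fmult h1 v) y + nem_deriv DG u (fmult h2 v) y)
       = nem_deriv DG u (fmult (\<lambda>y. h1 y + h2 y) v)"
  using linear_add[OF assms] by (simp add: nem_deriv_def fmult_def scaleR_add_left)

lemma ebasis_periodic: "ebasis k (t + 1) = ebasis k t"
proof -
  have "2 * pi * of_int k * (t + 1) = 2 * pi * of_int k * t + 2 * pi * of_int k"
    by (simp add: algebra_simps)
  then show ?thesis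
    by (simp add: ebasis_def cos_add sin_add cos_int_2pin sin_int_2pin)
qed

lemma transl_ebasis_periodic: "transl (- (x + 1)) (ebasis k) = transl (- x) (ebasis k)"
proof -
  have "ebasis k (y + x + 1) = ebasis k (y + x)" for y
    by (rule ebasis_periodic)
  then show ?thesis
    by (simp add: transl_def algebra_simps)
qed

lemma ebasis_add:
  "ebasis k (y + x) = cos (2 * pi * k * x) * ebasis k y + sin (2 * pi * k * x) * ebasis (- k) y"
proof -
  define a where "a = 2 * pi * k * y"
  define b where "b = 2 * pi * k * x"
  have sum: "2 * pi * k * (y + x) = a + b" and neg: "2 * pi * of_int (- k) * y = - a"
    by (simp_all add: a_def b_def algebra_simps)
  consider "k > 0" | "k = 0" | "k < 0" by linarith
  then show ?thesis
    by cases (simp_all add: ebasis_def sum neg a_def [symmetric] b_def [symmetric]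
        cos_add sin_add algebra_simps)
qed

lemma transl_ebasis:
  "transl (- x) (ebasis k) = (\<lambda>y. cos (2 * pi * k * x) * ebasis k y + sin (2 * pi * k * x) * ebasis (- k) y)"
  by (simp add: transl_def ebasis_add)

lemma transl_ebasis_uminus:
  "transl (- x) (ebasis (- k)) = (\<lambda>y. cos (2 * pi * k * x) * ebasis (- k) y + (- sin (2 * pi * k * x)) * ebasis k y)"
  using transl_ebasis[of x "- k"] by simp

lemma ebasis_sq_add_ebasis_uminus_sq: "(ebasis k t)\<^sup>2 + (ebasis (- k) t)\<^sup>2 = 2"
proof -
  have "(sqrt 2 * a)\<^sup>2 + (sqrt 2 * b)\<^sup>2 = 2" if "a\<^sup>2 + b\<^sup>2 = 1" for a b :: real
    using that by (simp add: power_mult_distrib algebra_simps)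
  then show ?thesis
    by (auto simp: ebasis_def sin_cos_squared_add add.commute)
qed

lemma rotation_sum_squares:
  fixes c s p q :: real
  assumes "c\<^sup>2 + s\<^sup>2 = 1"
  shows "(c * p + s * q)\<^sup>2 + (c * q + - s * p)\<^sup>2 = p\<^sup>2 + q\<^sup>2"
proof -
  have "(c * p + s * q)\<^sup>2 + (c * q + - s * p)\<^sup>2 = (c\<^sup>2 + s\<^sup>2) * (p\<^sup>2 + q\<^sup>2)"
    by (simp add: power2_eq_square algebra_simps)
  with assms show ?thesis by simp
qed

lemma rotation_quadratic_form_sum:
  fixes c s a b b' d :: real
  assumes "c\<^sup>2 + s\<^sup>2 = 1"
  shows "c\<^sup>2 * a + c * s * (b + b') + s\<^sup>2 * d + (c\<^sup>2 * d + c * - s * (b' + b) + (- s)\<^sup>2 * a) = a + d"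
proof -
  have "c\<^sup>2 * a + c * s * (b + b') + s\<^sup>2 * d + (c\<^sup>2 * d + c * - s * (b' + b) + (- s)\<^sup>2 * a)
      = (c\<^sup>2 + s\<^sup>2) * (a + d)"
    by (simp add: algebra_simps)
  with assms show ?thesis by simp
qed

lemma infsum_int_even_part:
  fixes f :: "int \<Rightarrow> real"
  assumes "f summable_on UNIV"
  shows "infsum f UNIV = infsum (\<lambda>k. f k + f (- k)) UNIV / 2"
proof -
  have "(\<lambda>k. f (- k)) summable_on UNIV" and "infsum (\<lambda>k. f (- k)) UNIV = infsum f UNIV"
    using summable_on_reindex_bij_betw[OF bij_uminus, of f] infsum_reindex_bij_betw[OF bij_uminus, of f] assms
    by simp_all
  then show ?thesis
    using infsum_add[OF assms] by simp
qed

lemma infsum_int_even_part_nonneg: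
  fixes f :: "int \<Rightarrow> real"
  assumes "\<And>k. f k \<ge> 0"
  shows "infsum f UNIV = infsum (\<lambda>k. f k + f (- k)) UNIV / 2"
proof (cases "f summable_on UNIV")
  case True
  then show ?thesis by (rule infsum_int_even_part)
next
  case False
  have "\<not> (\<lambda>k. f k + f (- k)) summable_on UNIV"
  proof
    assume "(\<lambda>k. f k + f (- k)) summable_on UNIV"
    then have "f summable_on UNIV"
      by (rule summable_on_comparison_test) (use assms in \<open>auto intro: add_increasing2\<close>)
    with False show False ..
  qed
  with False show ?thesis
    by (simp add: infsum_not_exists)
qed

lemma infsum_int_eq_if_even_parts_eq:
  fixes f g :: "int \<Rightarrow> real"
  assumes "f summable_on UNIV" and "g summable_on UNIV" and "\<And>k. f k + f (- k) = g k + g (- k)"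
  shows "infsum f UNIV = infsum g UNIV"
  using assms(3) by (simp add: infsum_int_even_part[OF assms(1)] infsum_int_even_part[OF assms(2)])

lemma infsum_int_eq_if_even_parts_eq_nonneg:
  fixes f g :: "int \<Rightarrow> real"
  assumes "\<And>k. f k \<ge> 0" and "\<And>k. g k \<ge> 0" and "\<And>k. f k + f (- k) = g k + g (- k)"
  shows "infsum f UNIV = infsum g UNIV"
  using assms(3) by (simp add: infsum_int_even_part_nonneg[OF assms(1)] infsum_int_even_part_nonneg[OF assms(2)])

definition frak_a_summand ::
  "(int \<Rightarrow> real) \<Rightarrow> ((real \<Rightarrow> 'a) \<Rightarrow> (real \<Rightarrow> 'a::real_vector) \<Rightarrow> real)
   \<Rightarrow> ((real \<Rightarrow> 'a) \<Rightarrow> (real \<Rightarrow> 'a) \<Rightarrow> (real \<Rightarrow> 'a) \<Rightarrow> real)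
   \<Rightarrow> ('a \<Rightarrow> 'a) \<Rightarrow> ('a \<Rightarrow> 'a \<Rightarrow> 'a) \<Rightarrow> (real \<Rightarrow> 'a) \<Rightarrow> real \<Rightarrow> int \<Rightarrow> real" where
  "frak_a_summand \<alpha> dpi d2pi G DG ustar x k = (\<alpha> k)\<^sup>2 *
     (dpi (transl x ustar)
          (nem_deriv DG (transl x ustar) (fmult (\<lambda>y. (ebasis k y)\<^sup>2) (nem G (transl x ustar))))
    + d2pi (transl x ustar) (fmult (ebasis k) (nem G (transl x ustar)))
                            (fmult (ebasis k) (nem G (transl x ustar))))"

lemma frak_a_eq_infsum: "frak_a \<alpha> dpi d2pi G DG ustar x = 1/2 * infsum (frak_a_summand \<alpha> dpi d2pi G DG ustar x) UNIV"
  unfolding frak_a_def frak_a_summand_def ..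

locale equivariant_isochron =
  fixes Xs :: "(real \<Rightarrow> 'a::real_vector) set"
    and ustar :: "real \<Rightarrow> 'a"
    and G :: "'a \<Rightarrow> 'a"
    and DG :: "'a \<Rightarrow> 'a \<Rightarrow> 'a"
    and dpi :: "(real \<Rightarrow> 'a) \<Rightarrow> (real \<Rightarrow> 'a) \<Rightarrow> real"
    and d2pi :: "(real \<Rightarrow> 'a) \<Rightarrow> (real \<Rightarrow> 'a) \<Rightarrow> (real \<Rightarrow> 'a) \<Rightarrow> real"
  assumes X_transl: "\<And>x v. v \<in> Xs \<Longrightarrow> transl x v \<in> Xs"
    and X_add: "\<And>v w. v \<in> Xs \<Longrightarrow> w \<in> Xs \<Longrightarrow> (\<lambda>y. v y + w y) \<in> Xs"
    and X_scale: "\<And>c v. v \<in> Xs \<Longrightarrow> (\<lambda>y. c *\<^sub>R v y) \<in> Xs"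
    and X_mult_e: "\<And>k v. v \<in> Xs \<Longrightarrow> fmult (ebasis k) v \<in> Xs"
    and g_X: "nem G ustar \<in> Xs"
    and DG_linear: "\<And>z. linear (DG z)"
    and dgg_X: "\<And>w. w \<in> Xs \<Longrightarrow> nem_deriv DG ustar w \<in> Xs"
    and dpi_linear: "\<And>a b v w. v \<in> Xs \<Longrightarrow> w \<in> Xs \<Longrightarrow>
        dpi ustar (\<lambda>y. a *\<^sub>R v y + b *\<^sub>R w y) = a * dpi ustar v + b * dpi ustar w"
    and d2pi_linear1: "\<And>a b v w z. v \<in> Xs \<Longrightarrow> w \<in> Xs \<Longrightarrow> z \<in> Xs \<Longrightarrow>
        d2pi ustar (\<lambda>y. a *\<^sub>R v y + b *\<^sub>R w y) z = a * d2pi ustar v z + b * d2pi ustar w z"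
    and d2pi_linear2: "\<And>a b v w z. v \<in> Xs \<Longrightarrow> w \<in> Xs \<Longrightarrow> z \<in> Xs \<Longrightarrow>
        d2pi ustar z (\<lambda>y. a *\<^sub>R v y + b *\<^sub>R w y) = a * d2pi ustar z v + b * d2pi ustar z w"
    and dpi_equiv: "\<And>x v. v \<in> Xs \<Longrightarrow> dpi (transl x ustar) v = dpi ustar (transl (-x) v)"
    and d2pi_equiv: "\<And>x v w. v \<in> Xs \<Longrightarrow> w \<in> Xs \<Longrightarrow>
        d2pi (transl x ustar) v w = d2pi ustar (transl (-x) v) (transl (-x) w)"
begin

lemma X_mult_transl_e: "v \<in> Xs \<Longrightarrow> fmult (transl a (ebasis k)) v \<in> Xs"
proof -
  assume "v \<in> Xs"
  then have "transl a (fmult (ebasis k) (transl (- a) v)) \<in> Xs"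
    by (intro X_transl X_mult_e)
  then show ?thesis
    by (simp add: transl_fmult)
qed

lemma X_mult_transl_e_sq: "v \<in> Xs \<Longrightarrow> fmult (\<lambda>y. (transl a (ebasis k) y)\<^sup>2) v \<in> Xs"
  unfolding power2_eq_square fmult_fmult [symmetric] by (intro X_mult_transl_e)

lemma g_transl_X: "nem G (transl x ustar) \<in> Xs"
  using X_transl[OF g_X] by (simp add: transl_nem)

lemma frak_b_comoving:
  "frak_b \<alpha> dpi G ustar x k = \<alpha> k * dpi ustar (fmult (transl (- x) (ebasis k)) (nem G ustar))"
  using X_mult_e[OF g_transl_X] by (simp add: frak_b_def dpi_equiv transl_pointwise)

lemma frak_a_summand_comoving:
  "frak_a_summand \<alpha> dpi d2pi G DG ustar x k = (\<alpha> k)\<^sup>2 *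
     (dpi ustar (nem_deriv DG ustar (fmult (\<lambda>y. (transl (- x) (ebasis k) y)\<^sup>2) (nem G ustar)))
    + d2pi ustar (fmult (transl (- x) (ebasis k)) (nem G ustar))
                 (fmult (transl (- x) (ebasis k)) (nem G ustar)))"
proof -
  have "nem_deriv DG (transl x ustar) (fmult (\<lambda>y. (ebasis k y)\<^sup>2) (nem G (transl x ustar)))
      = transl x (nem_deriv DG ustar (fmult (\<lambda>y. (transl (- x) (ebasis k) y)\<^sup>2) (nem G ustar)))"
    by (simp add: transl_def nem_deriv_def fmult_def nem_def)
  moreover have "\<dots> \<in> Xs"
    by (intro X_transl dgg_X X_mult_transl_e_sq g_X)
  ultimately show ?thesis
    using X_mult_e[OF g_transl_X]
    by (simp add: frak_a_summand_def dpi_equiv d2pi_equiv transl_pointwise)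
qed

lemma frak_b_periodic: "frak_b \<alpha> dpi G ustar (x + 1) k = frak_b \<alpha> dpi G ustar x k"
  by (simp only: frak_b_comoving transl_ebasis_periodic)

lemma frak_a_summand_periodic:
  "frak_a_summand \<alpha> dpi d2pi G DG ustar (x + 1) = frak_a_summand \<alpha> dpi d2pi G DG ustar x"
  by (rule ext) (simp only: frak_a_summand_comoving transl_ebasis_periodic)

lemma frak_a_periodic: "frak_a \<alpha> dpi d2pi G DG ustar (x + 1) = frak_a \<alpha> dpi d2pi G DG ustar x"
  by (simp only: frak_a_eq_infsum frak_a_summand_periodic)

lemma d2pi_diag_lincomb:
  assumes "v \<in> Xs" "w \<in> Xs"
  shows "d2pi ustar (\<lambda>y. a *\<^sub>R v y + b *\<^sub>R w y) (\<lambda>y. a *\<^sub>R v y + b *\<^sub>R w y)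
       = a\<^sup>2 * d2pi ustar v v + a * b * (d2pi ustar v w + d2pi ustar w v) + b\<^sup>2 * d2pi ustar w w"
proof -
  have "(\<lambda>y. a *\<^sub>R v y + b *\<^sub>R w y) \<in> Xs"
    using assms by (intro X_add X_scale)
  then show ?thesis
    using assms by (simp add: d2pi_linear1 d2pi_linear2 power2_eq_square algebra_simps)
qed

context
  fixes x :: real and k :: int and c s :: real
  defines "c \<equiv> cos (2 * pi * k * x)" and "s \<equiv> sin (2 * pi * k * x)"
begin

lemma fmult_transl_ebasis:
  "fmult (transl (- x) (ebasis k)) v = (\<lambda>y. c *\<^sub>R fmult (ebasis k) v y + s *\<^sub>R fmult (ebasis (- k)) v y)"
  by (simp only: c_def s_def transl_ebasis fmult_lincomb)

lemma fmult_transl_ebasis_uminus: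
  "fmult (transl (- x) (ebasis (- k))) v = (\<lambda>y. c *\<^sub>R fmult (ebasis (- k)) v y + (- s) *\<^sub>R fmult (ebasis k) v y)"
  by (simp only: c_def s_def transl_ebasis_uminus fmult_lincomb)

lemma frak_b_pair_sq:
  assumes "\<alpha> (- k) = \<alpha> k"
  shows "(frak_b \<alpha> dpi G ustar x k)\<^sup>2 + (frak_b \<alpha> dpi G ustar x (- k))\<^sup>2
       = (\<alpha> k)\<^sup>2 * ((dpi ustar (fmult (ebasis k) (nem G ustar)))\<^sup>2
                      + (dpi ustar (fmult (ebasis (- k)) (nem G ustar)))\<^sup>2)"
proof -
  define p where "p = dpi ustar (fmult (ebasis k) (nem G ustar))"
  define q where "q = dpi ustar (fmult (ebasis (- k)) (nem G ustar))"
  have "frak_b \<alpha> dpi G ustar x k = \<alpha> k * (c * p + s * q)"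
    unfolding frak_b_comoving fmult_transl_ebasis p_def q_def
    by (simp only: dpi_linear X_mult_e g_X)
  moreover have "frak_b \<alpha> dpi G ustar x (- k) = \<alpha> k * (c * q + - s * p)"
    unfolding frak_b_comoving fmult_transl_ebasis_uminus p_def q_def assms
    by (simp only: dpi_linear X_mult_e g_X)
  moreover have "c\<^sup>2 + s\<^sup>2 = 1"
    by (simp add: c_def s_def add.commute)
  ultimately show ?thesis
    unfolding p_def [symmetric] q_def [symmetric]
    by (simp only: power_mult_distrib distrib_left [symmetric] rotation_sum_squares)
qed

lemma frak_a_summand_pair:
  assumes "\<alpha> (- k) = \<alpha> k"
  shows "frak_a_summand \<alpha> dpi d2pi G DG ustar x k + frak_a_summand \<alpha> dpi d2pi G DG ustar x (- k)
       = (\<alpha> k)\<^sup>2 * (dpi ustar (nem_deriv DG ustar (fmult (\<lambda>_. 2) (nem G ustar)))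
                      + d2pi ustar (fmult (ebasis k) (nem G ustar)) (fmult (ebasis k) (nem G ustar))
                      + d2pi ustar (fmult (ebasis (- k)) (nem G ustar)) (fmult (ebasis (- k)) (nem G ustar)))"
proof -
  let ?V = "\<lambda>j. nem_deriv DG ustar (fmult (\<lambda>y. (transl (- x) (ebasis j) y)\<^sup>2) (nem G ustar))"
  let ?W = "\<lambda>j. fmult (transl (- x) (ebasis j)) (nem G ustar)"
  let ?P = "fmult (ebasis k) (nem G ustar)" and ?Q = "fmult (ebasis (- k)) (nem G ustar)"
  have V_X: "?V j \<in> Xs" for j
    by (intro dgg_X X_mult_transl_e_sq g_X)
  have "(\<lambda>y. 1 *\<^sub>R ?V k y + 1 *\<^sub>R ?V (- k) y)
      = nem_deriv DG ustar (fmult (\<lambda>y. (transl (- x) (ebasis k) y)\<^sup>2 + (transl (- x) (ebasis (- k)) y)\<^sup>2) (nem G ustar))"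
    unfolding scaleR_one by (rule nem_deriv_fmult_add[OF DG_linear])
  also have "\<dots> = nem_deriv DG ustar (fmult (\<lambda>_. 2) (nem G ustar))"
    by (simp add: transl_def ebasis_sq_add_ebasis_uminus_sq)
  finally have drift: "dpi ustar (?V k) + dpi ustar (?V (- k))
      = dpi ustar (nem_deriv DG ustar (fmult (\<lambda>_. 2) (nem G ustar)))"
    using dpi_linear[OF V_X V_X, of 1 k 1 "- k"] by simp
  have "c\<^sup>2 + s\<^sup>2 = 1"
    by (simp add: c_def s_def add.commute)
  then have diffusion: "d2pi ustar (?W k) (?W k) + d2pi ustar (?W (- k)) (?W (- k))
      = d2pi ustar ?P ?P + d2pi ustar ?Q ?Q"
    unfolding fmult_transl_ebasis fmult_transl_ebasis_uminus d2pi_diag_lincomb[OF X_mult_e X_mult_e, OF g_X g_X]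
    by (rule rotation_quadratic_form_sum)
  have "frak_a_summand \<alpha> dpi d2pi G DG ustar x k + frak_a_summand \<alpha> dpi d2pi G DG ustar x (- k)
      = (\<alpha> k)\<^sup>2 * ((dpi ustar (?V k) + dpi ustar (?V (- k)))
          + (d2pi ustar (?W k) (?W k) + d2pi ustar (?W (- k)) (?W (- k))))"
    unfolding frak_a_summand_comoving assms by (simp only: algebra_simps)
  then show ?thesis
    unfolding drift diffusion by (simp only: add.assoc)
qed

end

lemma frak_a_shift_invariant:
  assumes "\<And>k. \<alpha> k = \<alpha> (- k)" and "\<And>x. frak_a_summand \<alpha> dpi d2pi G DG ustar x summable_on UNIV"
  shows "frak_a \<alpha> dpi d2pi G DG ustar x = frak_a \<alpha> dpi d2pi G DG ustar 0"
proof -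
  have "infsum (frak_a_summand \<alpha> dpi d2pi G DG ustar x) UNIV = infsum (frak_a_summand \<alpha> dpi d2pi G DG ustar 0) UNIV"
    by (rule infsum_int_eq_if_even_parts_eq[OF assms(2) assms(2)])
      (simp only: frak_a_summand_pair assms(1) [symmetric])
  then show ?thesis
    by (simp only: frak_a_eq_infsum)
qed

lemma l2norm_frak_b_shift_invariant:
  assumes "\<And>k. \<alpha> k = \<alpha> (- k)"
  shows "l2norm (frak_b \<alpha> dpi G ustar x) = l2norm (frak_b \<alpha> dpi G ustar 0)"
proof -
  have "infsum (\<lambda>k. (frak_b \<alpha> dpi G ustar x k)\<^sup>2) UNIV = infsum (\<lambda>k. (frak_b \<alpha> dpi G ustar 0 k)\<^sup>2) UNIV"
    by (rule infsum_int_eq_if_even_parts_eq_nonneg)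
      (simp_all only: zero_le_power2 frak_b_pair_sq assms [symmetric])
  then show ?thesis
    by (simp only: l2norm_def)
qed

end

theorem proposition4p4:
  fixes Xs :: "(real \<Rightarrow> real^'n) set"
    and ustar :: "real \<Rightarrow> real^'n"
    and G :: "real^'n \<Rightarrow> real^'n"
    and DG :: "real^'n \<Rightarrow> real^'n \<Rightarrow> real^'n"
    and dpi :: "(real \<Rightarrow> real^'n) \<Rightarrow> (real \<Rightarrow> real^'n) \<Rightarrow> real"
    and d2pi :: "(real \<Rightarrow> real^'n) \<Rightarrow> (real \<Rightarrow> real^'n) \<Rightarrow> (real \<Rightarrow> real^'n) \<Rightarrow> real"
    and \<alpha> :: "int \<Rightarrow> real"
  assumes X_transl: "\<And>x v. v \<in> Xs \<Longrightarrow> transl x v \<in> Xs"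
    and X_add: "\<And>v w. v \<in> Xs \<Longrightarrow> w \<in> Xs \<Longrightarrow> (\<lambda>y. v y + w y) \<in> Xs"
    and X_scale: "\<And>c v. v \<in> Xs \<Longrightarrow> (\<lambda>y. c *\<^sub>R v y) \<in> Xs"
    and X_mult_e: "\<And>k v. v \<in> Xs \<Longrightarrow> fmult (ebasis k) v \<in> Xs"
    and ustar_X: "ustar \<in> Xs"
    and g_X: "nem G ustar \<in> Xs"
    and G_deriv: "\<And>z. (G has_derivative DG z) (at z)"
    and dgg_X: "\<And>w. w \<in> Xs \<Longrightarrow> nem_deriv DG ustar w \<in> Xs"
    and dpi_linear: "\<And>a b v w. v \<in> Xs \<Longrightarrow> w \<in> Xs \<Longrightarrow>
        dpi ustar (\<lambda>y. a *\<^sub>R v y + b *\<^sub>R w y) = a * dpi ustar v + b * dpi ustar w"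
    and d2pi_linear1: "\<And>a b v w z. v \<in> Xs \<Longrightarrow> w \<in> Xs \<Longrightarrow> z \<in> Xs \<Longrightarrow>
        d2pi ustar (\<lambda>y. a *\<^sub>R v y + b *\<^sub>R w y) z = a * d2pi ustar v z + b * d2pi ustar w z"
    and d2pi_linear2: "\<And>a b v w z. v \<in> Xs \<Longrightarrow> w \<in> Xs \<Longrightarrow> z \<in> Xs \<Longrightarrow>
        d2pi ustar z (\<lambda>y. a *\<^sub>R v y + b *\<^sub>R w y) = a * d2pi ustar z v + b * d2pi ustar z w"
    and dpi_equiv: "\<And>x v. v \<in> Xs \<Longrightarrow> dpi (transl x ustar) v = dpi ustar (transl (-x) v)"
    and d2pi_equiv: "\<And>x v w. v \<in> Xs \<Longrightarrow> w \<in> Xs \<Longrightarrow>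
        d2pi (transl x ustar) v w = d2pi ustar (transl (-x) v) (transl (-x) w)"
  shows "(\<forall>x::real. frak_a \<alpha> dpi d2pi G DG ustar x = frak_a \<alpha> dpi d2pi G DG ustar (x + 1))
       \<and> (\<forall>(x::real) (k::int). frak_b \<alpha> dpi G ustar x k = frak_b \<alpha> dpi G ustar (x + 1) k)
       \<and> ((\<forall>k. \<alpha> k = \<alpha> (- k))
           \<and> (\<forall>x::real. (\<lambda>k::int. (\<alpha> k)\<^sup>2 *
                 (dpi (transl x ustar)
                    (nem_deriv DG (transl x ustar) (fmult (\<lambda>y. (ebasis k y)\<^sup>2) (nem G (transl x ustar))))
                  + d2pi (transl x ustar) (fmult (ebasis k) (nem G (transl x ustar)))
                                          (fmult (ebasis k) (nem G (transl x ustar))))) summable_on UNIV)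
          \<longrightarrow> (\<forall>x::real. frak_a \<alpha> dpi d2pi G DG ustar x = frak_a \<alpha> dpi d2pi G DG ustar 0
                  \<and> l2norm (frak_b \<alpha> dpi G ustar x) = l2norm (frak_b \<alpha> dpi G ustar 0)))"
proof -
  interpret equivariant_isochron Xs ustar G DG dpi d2pi
    by (rule equivariant_isochron.intro) (fact assms has_derivative_linear[OF G_deriv])+
  have summand: "(\<lambda>k. (\<alpha> k)\<^sup>2 *
                 (dpi (transl x ustar)
                    (nem_deriv DG (transl x ustar) (fmult (\<lambda>y. (ebasis k y)\<^sup>2) (nem G (transl x ustar))))
                  + d2pi (transl x ustar) (fmult (ebasis k) (nem G (transl x ustar)))
                                          (fmult (ebasis k) (nem G (transl x ustar)))))
      = frak_a_summand \<alpha> dpi d2pi G DG ustar x" for x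
    by (simp add: frak_a_summand_def [abs_def])
  have "\<forall>x. frak_a \<alpha> dpi d2pi G DG ustar x = frak_a \<alpha> dpi d2pi G DG ustar (x + 1)"
    and "\<forall>x k. frak_b \<alpha> dpi G ustar x k = frak_b \<alpha> dpi G ustar (x + 1) k"
    by (simp_all only: frak_a_periodic frak_b_periodic simp_thms)
  moreover have "\<forall>x. frak_a \<alpha> dpi d2pi G DG ustar x = frak_a \<alpha> dpi d2pi G DG ustar 0
                  \<and> l2norm (frak_b \<alpha> dpi G ustar x) = l2norm (frak_b \<alpha> dpi G ustar 0)"
    if "\<forall>k. \<alpha> k = \<alpha> (- k)" and "\<forall>x. frak_a_summand \<alpha> dpi d2pi G DG ustar x summable_on UNIV"
    using frak_a_shift_invariant[where \<alpha> = \<alpha>, OF that[rule_format]]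
      l2norm_frak_b_shift_invariant[where \<alpha> = \<alpha>, OF that(1)[rule_format]]
    by blast
  ultimately show ?thesis
    unfolding summand by blast
qed

end
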